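(* Let $\mathcal{T}$ be a $2$-covered $3$-graph on $k\ge7$ vertices such that $\tau(\mathcal{T}[S])\le1$ for every set $S\subseteq V(\mathcal{T})$ with $|S|=7$. Then $\mathcal{T}$ is a star.
   Context: A $3$-graph is $2$-covered if every pair of its vertices is contained in some edge. $\tau(\mathcal{H})$ is the transversal number: the minimum size of a vertex set meeting every edge of $\mathcal{H}$ ($0$ if $\mathcal{H}$ has no edges). $\mathcal{T}[S]$ is the induced subgraph on $S$. A $3$-graph is a star if all its edges contain a common vertex. *)

theory Defs
  imports Main
begin

definition three_graph :: "'a set \<Rightarrow> 'a set set \<Rightarrow> bool" where
  "three_graph V E \<longleftrightarrow> finite V \<and> (\<forall>e\<in>E. e \<subseteq> V \<and> card e = 3)"

definition two_covered :: "'a set \<Rightarrow> 'a set set \<Rightarrow> bool" where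
  "two_covered V E \<longleftrightarrow> (\<forall>x\<in>V. \<forall>y\<in>V. x \<noteq> y \<longrightarrow> (\<exists>e\<in>E. x \<in> e \<and> y \<in> e))"

definition induced_edges :: "'a set set \<Rightarrow> 'a set \<Rightarrow> 'a set set" where
  "induced_edges E S = {e \<in> E. e \<subseteq> S}"

definition is_transversal :: "'a set \<Rightarrow> 'a set set \<Rightarrow> 'a set \<Rightarrow> bool" where
  "is_transversal V E T \<longleftrightarrow> T \<subseteq> V \<and> (\<forall>e\<in>E. T \<inter> e \<noteq> {})"

text \<open>Transversal number (0 if there are no edges, via the empty transversal).\<close>
definition tau :: "'a set \<Rightarrow> 'a set set \<Rightarrow> nat" where
  "tau V E = Min {card T | T. is_transversal V E T}"

definition is_star :: "'a set \<Rightarrow> 'a set set \<Rightarrow> bool" where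
  "is_star V E \<longleftrightarrow> (\<exists>v\<in>V. \<forall>e\<in>E. v \<in> e)"

end

theory Submission
  imports Defs
begin

text \<open>The hypothesis says that any family of edges spanning at most seven vertices has a common
vertex. Take an edge \<open>e = {a, b, c}\<close> and suppose edges \<open>f\<^sub>a, f\<^sub>b, f\<^sub>c\<close> miss \<open>a, b, c\<close> respectively.
Two edges span at most six vertices, so any two edges meet; hence every edge has at most two
vertices outside \<open>e\<close>, so \<open>e\<close> together with two further edges spans at most seven vertices, and
any two edges meet inside \<open>e\<close>. This forces \<open>{b, c} \<subseteq> f\<^sub>a\<close> and symmetrically, so
\<open>e, f\<^sub>a, f\<^sub>b, f\<^sub>c\<close> span at most six vertices; their common vertex lies in \<open>e\<close> but avoids \<open>a, b, c\<close>.\<close>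

lemma tau_attained:
  assumes "finite S" and "\<forall>e\<in>E. S \<inter> e \<noteq> {}"
  obtains T where "is_transversal S E T" and "card T = tau S E"
proof -
  let ?C = "{card T | T. is_transversal S E T}"
  have "is_transversal S E S" using assms(2) by (simp add: is_transversal_def)
  then have "?C \<noteq> {}" by blast
  moreover have "?C \<subseteq> card ` Pow S" by (auto simp: is_transversal_def)
  then have "finite ?C" using assms(1) finite_subset by blast
  ultimately have "Min ?C \<in> ?C" by (rule Min_in[rotated])
  then obtain T where T: "is_transversal S E T" "Min ?C = card T" by auto
  show ?thesis using that[OF T(1)] T(2) by (simp add: tau_def)
qed

lemma tau_le_one_imp_common_vertex:
  assumes "finite S" and "\<forall>e\<in>E. e \<subseteq> S \<and> e \<noteq> {}" and "tau S E \<le> 1"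
  shows "\<exists>v. \<forall>e\<in>E. v \<in> e"
proof (cases "E = {}")
  case False
  have "\<forall>e\<in>E. S \<inter> e \<noteq> {}" using assms(2) by blast
  then obtain T where T: "is_transversal S E T" "card T \<le> 1"
    using tau_attained[OF assms(1)] assms(3) by metis
  have "finite T" using T(1) assms(1) finite_subset by (auto simp: is_transversal_def)
  moreover have "T \<noteq> {}" using T(1) False by (auto simp: is_transversal_def)
  ultimately obtain v where "T = {v}"
    using T(2) by (metis card_1_singleton_iff card_gt_0_iff le_antisym One_nat_def Suc_leI)
  then show ?thesis using T(1) by (auto simp: is_transversal_def)
qed simp

lemma small_subfamily_has_common_vertex:
  assumes "three_graph V E" and "card V \<ge> 7"
    and "\<forall>S. S \<subseteq> V \<and> card S = 7 \<longrightarrow> tau S (induced_edges E S) \<le> 1"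
    and "F \<subseteq> E" and "card (\<Union>F) \<le> 7"
  shows "\<exists>v. \<forall>e\<in>F. v \<in> e"
proof -
  have "finite V" and "\<Union>F \<subseteq> V" using assms(1,4) by (auto simp: three_graph_def)
  then obtain S where S: "\<Union>F \<subseteq> S" "S \<subseteq> V" "card S = 7"
    using exists_subset_between[OF assms(5) assms(2)] by blast
  have "\<forall>e\<in>induced_edges E S. e \<subseteq> S \<and> e \<noteq> {}"
    using assms(1) by (auto simp: induced_edges_def three_graph_def)
  moreover have "finite S" using S(2) \<open>finite V\<close> finite_subset by blast
  moreover have "tau S (induced_edges E S) \<le> 1" using assms(3) S(2,3) by blast
  ultimately obtain v where "\<forall>e\<in>induced_edges E S. v \<in> e"
    using tau_le_one_imp_common_vertex by metis
  moreover have "F \<subseteq> induced_edges E S" using assms(4) S(1) by (auto simp: induced_edges_def)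
  ultimately show ?thesis by blast
qed

lemma card_Union_insert_le:
  assumes "finite F" and "\<forall>f\<in>F. card (f - e) \<le> k"
  shows "card (\<Union>(insert e F)) \<le> card e + card F * k"
  using assms
proof (induction F rule: finite_induct)
  case (insert f F)
  have "\<Union>(insert e (insert f F)) = \<Union>(insert e F) \<union> (f - e)" by blast
  then have "card (\<Union>(insert e (insert f F))) \<le> card (\<Union>(insert e F)) + card (f - e)"
    by (simp add: card_Un_le)
  with insert show ?case by simp
qed simp

lemma card_Diff_le_of_card_Int:
  assumes "finite A" and "k \<le> card (A \<inter> B)"
  shows "card (A - B) \<le> card A - k"
  using assms by (simp add: card_Diff_subset_Int)

lemma three_sets_meet_within_member:
  assumes three: "\<forall>e\<in>E. card e = 3"
    and small: "\<And>F. F \<subseteq> E \<Longrightarrow> card (\<Union>F) \<le> 7 \<Longrightarrow> \<exists>v. \<forall>e\<in>F. v \<in> e"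
    and "e \<in> E" "f \<in> E" "g \<in> E"
  shows "\<exists>v\<in>e. v \<in> f \<and> v \<in> g"
proof -
  have outside_le_2: "card (h - e) \<le> 2" if "h \<in> E" for h
  proof -
    have "card (\<Union>{h, e}) \<le> 7" using card_Un_le[of h e] three that \<open>e \<in> E\<close> by simp
    then have "h \<inter> e \<noteq> {}" using small[of "{h, e}"] that \<open>e \<in> E\<close> by blast
    moreover have "finite h" using three that by (metis card.infinite zero_neq_numeral)
    ultimately have "1 \<le> card (h \<inter> e)" by (simp add: Suc_le_eq card_gt_0_iff)
    then show ?thesis
      using card_Diff_le_of_card_Int[OF \<open>finite h\<close>] three that by fastforce
  qed
  have "card (\<Union>(insert e {f, g})) \<le> card e + card {f, g} * 2"
    by (rule card_Union_insert_le) (use outside_le_2 assms(4,5) in auto)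
  moreover have "card {f, g} \<le> 2" using card_length[of "[f, g]"] by simp
  ultimately have "card (\<Union>(insert e {f, g})) \<le> 7" using three assms(3) by simp
  then show ?thesis using small[of "insert e {f, g}"] assms(3-5) by auto
qed

lemma three_sets_common_vertex:
  assumes three: "\<forall>e\<in>E. card e = 3"
    and small: "\<And>F. F \<subseteq> E \<Longrightarrow> card (\<Union>F) \<le> 7 \<Longrightarrow> \<exists>v. \<forall>e\<in>F. v \<in> e"
  shows "\<exists>v. \<forall>e\<in>E. v \<in> e"
proof (rule ccontr)
  assume no_common: "\<nexists>v. \<forall>e\<in>E. v \<in> e"
  then obtain e where e: "e \<in> E" by blast
  then obtain a b c where abc: "e = {a, b, c}" "a \<noteq> b" "b \<noteq> c" "a \<noteq> c"
    using three card_3_iff by metis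
  have meet_in_e: "\<exists>v\<in>e. v \<in> f \<and> v \<in> g" if "f \<in> E" "g \<in> E" for f g
    using three small e that by (rule three_sets_meet_within_member)
  have outside_le_1: "card (f - e) \<le> 1" if "f \<in> E" "{x, y} \<subseteq> f \<inter> e" "x \<noteq> y" for f x y
  proof -
    have "finite f" using three that(1) by (metis card.infinite zero_neq_numeral)
    then have "2 \<le> card (f \<inter> e)" using card_mono[OF _ that(2)] that(3) by simp
    then show ?thesis using card_Diff_le_of_card_Int[OF \<open>finite f\<close>] three that(1) by fastforce
  qed
  have "\<forall>x\<in>e. \<exists>f\<in>E. x \<notin> f" using no_common e by blast
  then obtain fa fb fc where fa: "fa \<in> E" "a \<notin> fa" and fb: "fb \<in> E" "b \<notin> fb"
    and fc: "fc \<in> E" "c \<notin> fc"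
    using abc(1) by blast
  have "c \<in> fa" "c \<in> fb" using meet_in_e[OF fa(1) fb(1)] fa fb abc(1) by auto
  moreover have "b \<in> fa" "b \<in> fc" using meet_in_e[OF fa(1) fc(1)] fa fc abc(1) by auto
  moreover have "a \<in> fb" "a \<in> fc" using meet_in_e[OF fb(1) fc(1)] fb fc abc(1) by auto
  ultimately have "\<forall>f\<in>{fa, fb, fc}. card (f - e) \<le> 1"
    using outside_le_1[of fa b c] outside_le_1[of fb a c] outside_le_1[of fc a b] fa fb fc abc
    by auto
  then have "card (\<Union>(insert e {fa, fb, fc})) \<le> card e + card {fa, fb, fc} * 1"
    by (intro card_Union_insert_le) auto
  moreover have "card {fa, fb, fc} \<le> 3" using card_length[of "[fa, fb, fc]"] by simp
  ultimately have "card (\<Union>(insert e {fa, fb, fc})) \<le> 7" using three e by simp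
  then obtain v where "\<forall>f\<in>insert e {fa, fb, fc}. v \<in> f"
    using small[of "insert e {fa, fb, fc}"] e fa fb fc by auto
  then show False using abc(1) fa fb fc by auto
qed

theorem lemma4p4:
  fixes V :: "'a set" and E :: "'a set set"
  assumes "three_graph V E"
    and "two_covered V E"
    and "card V \<ge> 7"
    and "\<forall>S. S \<subseteq> V \<and> card S = 7 \<longrightarrow> tau S (induced_edges E S) \<le> 1"
  shows "is_star V E"
proof -
  have edges: "\<forall>e\<in>E. e \<subseteq> V \<and> card e = 3" using assms(1) by (simp add: three_graph_def)
  obtain v where v: "\<forall>e\<in>E. v \<in> e"
    using three_sets_common_vertex[of E] small_subfamily_has_common_vertex[OF assms(1,3,4)] edges
    by blast
  show ?thesis
  proof (cases "E = {}")
    case True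
    have "V \<noteq> {}" using assms(3) by auto
    with True show ?thesis by (auto simp: is_star_def)
  next
    case False
    then have "v \<in> V" using v edges by blast
    with v show ?thesis by (auto simp: is_star_def)
  qed
qed

end
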